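(* Let $X,k\in\mathbb{N}$ with $k\ge0$ and set $K=2^{k-1}$. Let $P$ be a polynomial of degree $k$ with real coefficients and let $\alpha$ be its leading coefficient. Let $g$ be a real function, $k$ times continuously differentiable on $[X,2X]$, such that $\lvert g^{(r)}(x)\rvert\asymp GX^{-r}$ for $r=1,\dots,k$. Then, for $G$ and $X$ large enough, for arbitrary $\varepsilon>0$, \[\Big\lvert\sum_{X<n\le2X}e(P(n)+g(n))\Big\rvert^{2^{k-1}}\ll X^{2^{k-1}-1}+(1+G)X^{2^{k-1}-k+\varepsilon}\sum_{t=1}^{k!X^{k-1}}\min\Big(X,\frac{1}{\lVert t\alpha\rVert}\Big).\]
   Context: $e(x)=\exp(2\pi ix)$; $\lVert x\rVert$ is the distance from $x$ to the nearest integer; $A\asymp B$ means $A\ll B$ and $B\ll A$. *)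

theory Defs
  imports Complex_Main "HOL-Computational_Algebra.Polynomial"
begin

definition e :: "real \<Rightarrow> complex" where
  "e x = exp (2 * of_real pi * \<i> * of_real x)"

definition dist_int :: "real \<Rightarrow> real" where
  "dist_int x = \<bar>x - of_int (round x)\<bar>"

text \<open>min(X, 1/||y||), with the convention 1/0 = infinity (so the value is X).\<close>
definition min_recip :: "real \<Rightarrow> real \<Rightarrow> real" where
  "min_recip X y = (if dist_int y = 0 then X else min X (1 / dist_int y))"

end

theory Submission
  imports Defs "HOL-Analysis.Analysis" "HOL-Computational_Algebra.Primes"
begin

text \<open>Applying van der Corput's differencing k - 1 times bounds |S|^(2^(k-1)) by X^(2^(k-1)-1)
  plus X^(2^(k-1)-k) times the sum, over shifts 1 \<le> h_i < X, of the differenced exponential sums.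
  After k - 1 differences the phase P + g has increments k! h_1\<cdots>h_(k-1) \<alpha> plus a k-th
  difference of g, which is \<ll> h_1\<cdots>h_(k-1) G X^(-k) by the mean value theorem; partial
  summation against a geometric series therefore bounds each differenced sum by
  (1 + G) min(X, 1/\<parallel>k! h_1\<cdots>h_(k-1) \<alpha>\<parallel>). Finally the shifts are grouped by
  t = k! h_1\<cdots>h_(k-1) \<le> k! X^(k-1), and each t arises from at most d(t)^(k-1) \<ll> X^\<epsilon>
  tuples by the divisor bound.\<close>

section \<open>The additive character\<close>

lemma e_add: "e (x + y) = e x * e y"
  unfolding e_def by (simp add: distrib_left distrib_right exp_add)

lemma e_diff: "e (x - y) = e x / e y"
  unfolding e_def by (simp add: exp_diff algebra_simps)

lemma e_of_int: "e (of_int n) = 1"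
proof -
  have "e (of_int n) = exp ((2 * of_int n * pi) * \<i>)"
    unfolding e_def by (simp add: algebra_simps)
  also have "\<dots> = 1" by (rule exp_integer_2pi) simp
  finally show ?thesis .
qed

lemma e_of_nat_mult: "e (real j * b) = e b ^ j"
  unfolding e_def using exp_of_nat_mult[of j "2 * of_real pi * \<i> * of_real b"]
  by (simp add: algebra_simps)

lemma norm_e [simp]: "norm (e x) = 1"
  unfolding e_def by (metis mult.commute mult.left_commute norm_exp_i_times of_real_mult of_real_numeral)

lemma cnj_e: "cnj (e x) = e (- x)"
  unfolding e_def by (simp add: exp_cnj)

lemma e_mult_cnj: "e x * cnj (e x) = 1"
  unfolding cnj_e e_add[symmetric] by (simp add: e_def)

lemma e_eq_exp_i: "e x = exp (\<i> * of_real (2 * pi * x))"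
  unfolding e_def by (simp add: algebra_simps)

lemma norm_1_minus_exp_i: "norm (1 - exp (\<i> * of_real t)) = 2 * \<bar>sin (t / 2)\<bar>"
proof -
  have "(norm (1 - exp (\<i> * of_real t)))\<^sup>2 = (1 - cos t)\<^sup>2 + (sin t)\<^sup>2"
    by (simp add: cmod_power2 exp_Euler cos_of_real sin_of_real)
  also have "\<dots> = 2 - 2 * cos t"
    by (simp add: power2_eq_square algebra_simps sin_squared_eq)
  also have "cos t = 1 - 2 * (sin (t / 2))\<^sup>2"
    using cos_double_sin[of "t / 2"] by simp
  finally have "(norm (1 - exp (\<i> * of_real t)))\<^sup>2 = (2 * \<bar>sin (t / 2)\<bar>)\<^sup>2"
    by (simp add: power_mult_distrib)
  thus ?thesis
    using power2_eq_iff_nonneg[of "norm (1 - exp (\<i> * of_real t))" "2 * \<bar>sin (t / 2)\<bar>"] by simp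
qed

lemma norm_e_minus_1_le: "norm (e t - 1) \<le> 2 * pi * \<bar>t\<bar>"
proof -
  have "norm (e t - 1) = 2 * \<bar>sin (pi * t)\<bar>"
    using norm_1_minus_exp_i[of "2 * pi * t"] by (simp add: norm_minus_commute e_eq_exp_i)
  also have "\<dots> \<le> 2 * \<bar>pi * t\<bar>" using abs_sin_x_le_abs_x by simp
  finally show ?thesis by (simp add: abs_mult)
qed

lemma sin_ge_div_3:
  assumes "0 \<le> x" "x \<le> pi / 2"
  shows "x / 3 \<le> sin x"
proof (cases "x \<le> 1")
  case True
  have "\<bar>sin x - (\<Sum>m<3. sin_coeff m * x ^ m)\<bar> \<le> inverse (fact 3) * \<bar>x\<bar> ^ 3"
    by (rule Maclaurin_sin_bound)
  moreover have "(\<Sum>m<3. sin_coeff m * x ^ m) = x"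
    by (simp add: numeral_3_eq_3 sin_coeff_def)
  ultimately have "\<bar>sin x - x\<bar> \<le> x ^ 3 / 6"
    using assms by (simp add: fact_numeral)
  hence "x - x ^ 3 / 6 \<le> sin x" by linarith
  moreover have "x ^ 3 \<le> x"
    using power_decreasing[of 1 3 x] True assms by simp
  ultimately show ?thesis using assms by linarith
next
  case False
  have "sin 1 \<le> sin x" using False assms by (intro sin_monotone_2pi_le) auto
  moreover have "\<bar>sin 1 - (\<Sum>m<3. sin_coeff m * 1 ^ m)\<bar> \<le> inverse (fact 3) * \<bar>1\<bar> ^ 3"
    by (rule Maclaurin_sin_bound)
  moreover have "(\<Sum>m<3. sin_coeff m * (1::real) ^ m) = 1"
    by (simp add: numeral_3_eq_3 sin_coeff_def)
  moreover have "x \<le> 2" using assms pi_half_less_two by linarith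
  ultimately show ?thesis by (simp add: fact_numeral)
qed

lemma dist_int_nonneg: "0 \<le> dist_int x"
  unfolding dist_int_def by simp

lemma dist_int_le_half: "dist_int x \<le> 1 / 2"
  unfolding dist_int_def using of_int_round_abs_le[of x] by (simp add: abs_minus_commute)

lemma norm_1_minus_e_ge: "2 * dist_int b \<le> norm (1 - e b)"
proof -
  define r where "r = b - of_int (round b)"
  have r: "\<bar>r\<bar> \<le> 1 / 2" "dist_int b = \<bar>r\<bar>"
    using dist_int_le_half[of b] unfolding r_def dist_int_def by auto
  have "e b = e r" unfolding r_def e_diff e_of_int by simp
  hence "norm (1 - e b) = 2 * \<bar>sin (pi * r)\<bar>"
    by (simp only: e_eq_exp_i norm_1_minus_exp_i) simp
  moreover have "\<bar>sin (pi * r)\<bar> = sin (pi * \<bar>r\<bar>)"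
  proof (cases "r \<ge> 0")
    case True
    hence "sin (pi * r) \<ge> 0" using r by (intro sin_ge_zero) auto
    thus ?thesis using True by simp
  next
    case False
    moreover have "pi * (- r) \<le> pi * 1" using r by (intro mult_left_mono) auto
    ultimately have "sin (pi * (- r)) \<ge> 0" by (intro sin_ge_zero) (auto simp: mult_nonneg_nonpos)
    thus ?thesis using False by simp
  qed
  moreover have "pi * \<bar>r\<bar> / 3 \<le> sin (pi * \<bar>r\<bar>)"
    using r by (intro sin_ge_div_3) auto
  moreover have "\<bar>r\<bar> \<le> pi * \<bar>r\<bar> / 3"
    using pi_gt3 mult_right_mono[of 3 pi "\<bar>r\<bar>"] by simp
  ultimately show ?thesis using r by linarith
qed

lemma min_recip_nonneg: "0 \<le> X \<Longrightarrow> 0 \<le> min_recip X y"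
  unfolding min_recip_def using dist_int_nonneg[of y] by auto

lemma norm_sum_e_linear_le_min_recip:
  assumes "m \<le> M"
  shows "norm (\<Sum>j<m. e (real j * b)) \<le> min_recip (real M) b"
proof -
  have trivial: "norm (\<Sum>j<m. e (real j * b)) \<le> real m"
    using norm_sum[of "\<lambda>j. e (real j * b)" "{..<m}"] by simp
  have geometric: "norm (\<Sum>j<m. e (real j * b)) \<le> 1 / dist_int b" if d: "dist_int b > 0"
  proof -
    have ne: "norm (1 - e b) > 0" using norm_1_minus_e_ge[of b] d by linarith
    hence "(\<Sum>j<m. e (real j * b)) = (1 - e b ^ m) / (1 - e b)"
      unfolding e_of_nat_mult by (subst sum_gp_strict) auto
    hence "norm (\<Sum>j<m. e (real j * b)) = norm (1 - e b ^ m) / norm (1 - e b)"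
      by (simp add: norm_divide)
    also have "\<dots> \<le> 2 / norm (1 - e b)"
      using ne norm_triangle_ineq4[of 1 "e b ^ m"] by (intro divide_right_mono) (auto simp: norm_power)
    also have "\<dots> \<le> 2 / (2 * dist_int b)"
      using d ne norm_1_minus_e_ge[of b] by (intro divide_left_mono) auto
    finally show ?thesis by simp
  qed
  show ?thesis
    using trivial geometric assms dist_int_nonneg[of b] unfolding min_recip_def
    by (cases "dist_int b = 0") (auto simp: order.trans)
qed

section \<open>Partial summation\<close>

lemma summation_by_parts:
  fixes a w :: "nat \<Rightarrow> 'a::comm_ring"
  shows "(\<Sum>i<Suc m. a i * w i)
           = (\<Sum>j<Suc m. a j) * w m - (\<Sum>i<m. (\<Sum>j<Suc i. a j) * (w (Suc i) - w i))"
  by (induction m) (simp_all add: algebra_simps)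

lemma norm_sum_by_parts_le:
  fixes a w :: "nat \<Rightarrow> 'a::real_normed_field"
  assumes "\<And>m'. m' \<le> Suc m \<Longrightarrow> norm (\<Sum>j<m'. a j) \<le> B" and "norm (w m) \<le> 1"
  shows "norm (\<Sum>i<Suc m. a i * w i) \<le> B * (1 + (\<Sum>i<m. norm (w (Suc i) - w i)))"
proof -
  have "B \<ge> 0" using assms(1)[of 0] by simp
  have "norm (\<Sum>i<Suc m. a i * w i)
          \<le> norm ((\<Sum>j<Suc m. a j) * w m) + norm (\<Sum>i<m. (\<Sum>j<Suc i. a j) * (w (Suc i) - w i))"
    unfolding summation_by_parts by (rule norm_triangle_ineq4)
  also have "norm ((\<Sum>j<Suc m. a j) * w m) \<le> B * 1"
    unfolding norm_mult using assms(1)[of "Suc m"] assms(2) \<open>B \<ge> 0\<close>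
    by (intro mult_mono) (auto simp del: sum.lessThan_Suc)
  also have "norm (\<Sum>i<m. (\<Sum>j<Suc i. a j) * (w (Suc i) - w i)) \<le> (\<Sum>i<m. B * norm (w (Suc i) - w i))"
    using assms(1) by (intro order.trans[OF norm_sum] sum_mono)
      (auto simp: norm_mult simp del: sum.lessThan_Suc intro!: mult_right_mono)
  finally show ?thesis by (simp add: sum_distrib_left algebra_simps)
qed

lemma norm_sum_e_almost_linear_le:
  fixes \<psi> \<delta> :: "nat \<Rightarrow> real"
  assumes "\<And>i. Suc i < L \<Longrightarrow> \<psi> (Suc i) - \<psi> i = b + \<delta> i" and "L \<le> M"
  shows "norm (\<Sum>i<L. e (\<psi> i)) \<le> min_recip (real M) b * (1 + 2 * pi * (\<Sum>i<L - 1. \<bar>\<delta> i\<bar>))"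
proof (cases L)
  case 0 thus ?thesis using min_recip_nonneg[of "real M" b] by simp
next
  case (Suc m)
  define w where "w i = e (\<psi> i - real i * b)" for i
  have "(\<Sum>i<L. e (\<psi> i)) = (\<Sum>i<Suc m. e (real i * b) * w i)"
    unfolding Suc w_def e_add[symmetric] by simp
  also have "norm \<dots> \<le> min_recip (real M) b * (1 + (\<Sum>i<m. norm (w (Suc i) - w i)))"
    using Suc assms(2) by (intro norm_sum_by_parts_le norm_sum_e_linear_le_min_recip) (auto simp: w_def)
  also have "(\<Sum>i<m. norm (w (Suc i) - w i)) \<le> (\<Sum>i<m. 2 * pi * \<bar>\<delta> i\<bar>)"
  proof (rule sum_mono)
    fix i assume "i \<in> {..<m}"
    hence "\<psi> (Suc i) - real (Suc i) * b = (\<psi> i - real i * b) + \<delta> i"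
      using assms(1) Suc by (auto simp: algebra_simps)
    hence "w (Suc i) = w i * e (\<delta> i)"
      unfolding w_def by (simp add: e_add)
    hence "w (Suc i) - w i = w i * (e (\<delta> i) - 1)"
      by (simp add: algebra_simps)
    thus "norm (w (Suc i) - w i) \<le> 2 * pi * \<bar>\<delta> i\<bar>"
      using norm_e_minus_1_le by (simp add: w_def norm_mult)
  qed
  hence "min_recip (real M) b * (1 + (\<Sum>i<m. norm (w (Suc i) - w i)))
           \<le> min_recip (real M) b * (1 + (\<Sum>i<m. 2 * pi * \<bar>\<delta> i\<bar>))"
    by (intro mult_left_mono min_recip_nonneg) auto
  finally show ?thesis using Suc by (simp add: sum_distrib_left)
qed

section \<open>Weyl differencing\<close>

definition exp_sum :: "nat \<Rightarrow> (nat \<Rightarrow> real) \<Rightarrow> complex" where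
  "exp_sum L \<phi> = (\<Sum>i<L. e (\<phi> i))"

definition shift_diff :: "nat \<Rightarrow> (nat \<Rightarrow> real) \<Rightarrow> nat \<Rightarrow> real" where
  "shift_diff h \<phi> i = \<phi> (i + h) - \<phi> i"

fun shift_diffs :: "nat list \<Rightarrow> (nat \<Rightarrow> real) \<Rightarrow> nat \<Rightarrow> real" where
  "shift_diffs [] \<phi> = \<phi>"
| "shift_diffs (h # hs) \<phi> = shift_diff h (shift_diffs hs \<phi>)"

lemma exp_sum_0 [simp]: "exp_sum 0 \<phi> = 0"
  unfolding exp_sum_def by simp

lemma sum_times_cnj_sum:
  fixes z :: "nat \<Rightarrow> complex"
  assumes "\<And>i. z i * cnj (z i) = 1"
  shows "(\<Sum>i<L. z i) * cnj (\<Sum>i<L. z i)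
           = of_nat L + (\<Sum>j<L. \<Sum>i<j. z j * cnj (z i)) + cnj (\<Sum>j<L. \<Sum>i<j. z j * cnj (z i))"
proof (induction L)
  case 0 thus ?case by simp
next
  case (Suc L)
  have "(\<Sum>i<Suc L. z i) * cnj (\<Sum>i<Suc L. z i)
          = (\<Sum>i<L. z i) * cnj (\<Sum>i<L. z i) + z L * cnj (z L)
            + z L * cnj (\<Sum>i<L. z i) + (\<Sum>i<L. z i) * cnj (z L)"
    by (simp add: algebra_simps)
  moreover have "z L * cnj (\<Sum>i<L. z i) = (\<Sum>i<L. z L * cnj (z i))"
    by (simp add: sum_distrib_left cnj_sum)
  moreover have "(\<Sum>i<L. z i) * cnj (z L) = cnj (\<Sum>i<L. z L * cnj (z i))"
    by (simp add: cnj_sum sum_distrib_left sum_distrib_right mult.commute)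
  ultimately show ?case unfolding Suc assms by (simp add: cnj_sum algebra_simps)
qed

lemma sum_lower_triangle_by_diagonals:
  fixes F :: "nat \<Rightarrow> nat \<Rightarrow> 'a::comm_monoid_add"
  shows "(\<Sum>j<L. \<Sum>i<j. F i j) = (\<Sum>h\<in>{1..<L}. \<Sum>i<L - h. F i (i + h))"
proof -
  have "(\<Sum>j<L. \<Sum>i<j. F i j) = (\<Sum>(j, i)\<in>Sigma {..<L} (\<lambda>j. {..<j}). F i j)"
    by (simp add: sum.Sigma)
  also have "\<dots> = (\<Sum>(h, i)\<in>Sigma {1..<L} (\<lambda>h. {..<L - h}). F i (i + h))"
    by (rule sum.reindex_bij_witness[where i = "\<lambda>(h, i). (i + h, i)" and j = "\<lambda>(j, i). (j - i, i)"])
      auto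
  also have "\<dots> = (\<Sum>h\<in>{1..<L}. \<Sum>i<L - h. F i (i + h))"
    by (simp add: sum.Sigma)
  finally show ?thesis .
qed

lemma norm_exp_sum_square_le:
  "(norm (exp_sum L \<phi>))\<^sup>2 \<le> real L + 2 * (\<Sum>h\<in>{1..<L}. norm (exp_sum (L - h) (shift_diff h \<phi>)))"
proof -
  define T where "T = (\<Sum>j<L. \<Sum>i<j. e (\<phi> j) * cnj (e (\<phi> i)))"
  have "complex_of_real ((norm (exp_sum L \<phi>))\<^sup>2) = exp_sum L \<phi> * cnj (exp_sum L \<phi>)"
    using complex_norm_square[of "exp_sum L \<phi>"] by simp
  also have "\<dots> = of_nat L + T + cnj T"
    unfolding exp_sum_def T_def by (rule sum_times_cnj_sum) (rule e_mult_cnj)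
  also have "\<dots> = of_real (real L + 2 * Re T)"
    by (simp add: complex_eq_iff)
  finally have "(norm (exp_sum L \<phi>))\<^sup>2 = real L + 2 * Re T"
    by (simp only: of_real_eq_iff)
  moreover have "T = (\<Sum>h\<in>{1..<L}. exp_sum (L - h) (shift_diff h \<phi>))"
    unfolding T_def sum_lower_triangle_by_diagonals exp_sum_def shift_diff_def
    by (intro sum.cong refl) (simp add: cnj_e e_add[symmetric])
  hence "Re T \<le> (\<Sum>h\<in>{1..<L}. norm (exp_sum (L - h) (shift_diff h \<phi>)))"
    using complex_Re_le_cmod[of T] norm_sum[of "\<lambda>h. exp_sum (L - h) (shift_diff h \<phi>)" "{1..<L}"]
    by simp
  ultimately show ?thesis by simp
qed

lemma norm_exp_sum_shift_diffs_square_le: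
  "(norm (exp_sum (L - sum_list hs) (shift_diffs hs \<phi>)))\<^sup>2
     \<le> real L + 2 * (\<Sum>h\<in>{1..<L}. norm (exp_sum (L - sum_list (h # hs)) (shift_diffs (h # hs) \<phi>)))"
proof -
  let ?M = "L - sum_list hs"
  have "(norm (exp_sum ?M (shift_diffs hs \<phi>)))\<^sup>2
          \<le> real ?M + 2 * (\<Sum>h\<in>{1..<?M}. norm (exp_sum (?M - h) (shift_diff h (shift_diffs hs \<phi>))))"
    by (rule norm_exp_sum_square_le)
  also have "(\<Sum>h\<in>{1..<?M}. norm (exp_sum (?M - h) (shift_diff h (shift_diffs hs \<phi>))))
               \<le> (\<Sum>h\<in>{1..<L}. norm (exp_sum (?M - h) (shift_diff h (shift_diffs hs \<phi>))))"
    by (rule sum_mono2) auto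
  finally show ?thesis by (simp add: diff_diff_add add.commute)
qed

definition shift_lists :: "nat \<Rightarrow> nat \<Rightarrow> nat list set" where
  "shift_lists j L = {hs. set hs \<subseteq> {1..<L} \<and> length hs = j}"

lemma finite_shift_lists: "finite (shift_lists j L)"
  unfolding shift_lists_def by (rule finite_lists_length_eq) simp

lemma card_shift_lists_le: "real (card (shift_lists j L)) \<le> real L ^ j"
  unfolding shift_lists_def using card_lists_length_eq[of "{1..<L}" j]
  by (simp add: power_mono flip: of_nat_power)

lemma shift_lists_0 [simp]: "shift_lists 0 L = {[]}"
  unfolding shift_lists_def by auto

lemma sum_shift_lists_Suc:
  "(\<Sum>hs\<in>shift_lists (Suc j) L. F hs) = (\<Sum>hs\<in>shift_lists j L. \<Sum>h\<in>{1..<L}. F (h # hs))"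
proof -
  have "shift_lists (Suc j) L = (\<lambda>(h, hs). h # hs) ` ({1..<L} \<times> shift_lists j L)"
    unfolding shift_lists_def by (auto simp: length_Suc_conv image_iff)
  moreover have "inj_on (\<lambda>(h, hs). h # hs) ({1..<L} \<times> shift_lists j L)"
    by (auto simp: inj_on_def)
  ultimately have "(\<Sum>hs\<in>shift_lists (Suc j) L. F hs) = (\<Sum>(h, hs)\<in>{1..<L} \<times> shift_lists j L. F (h # hs))"
    by (simp add: sum.reindex case_prod_unfold)
  also have "\<dots> = (\<Sum>h\<in>{1..<L}. \<Sum>hs\<in>shift_lists j L. F (h # hs))"
    by (rule sum.cartesian_product[symmetric])
  also have "\<dots> = (\<Sum>hs\<in>shift_lists j L. \<Sum>h\<in>{1..<L}. F (h # hs))"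
    by (rule sum.swap)
  finally show ?thesis .
qed

lemma sum_shift_lists_square_le:
  fixes L :: nat and \<phi> :: "nat \<Rightarrow> real"
  defines "w \<equiv> \<lambda>hs. norm (exp_sum (L - sum_list hs) (shift_diffs hs \<phi>))"
  shows "(\<Sum>hs\<in>shift_lists j L. w hs)\<^sup>2
           \<le> real L ^ j * (real L ^ (j + 1) + 2 * (\<Sum>hs\<in>shift_lists (Suc j) L. w hs))"
proof -
  have "(\<Sum>hs\<in>shift_lists j L. (w hs)\<^sup>2)
          \<le> (\<Sum>hs\<in>shift_lists j L. real L + 2 * (\<Sum>h\<in>{1..<L}. w (h # hs)))"
    unfolding w_def by (intro sum_mono norm_exp_sum_shift_diffs_square_le)
  also have "\<dots> = real (card (shift_lists j L)) * real L + 2 * (\<Sum>hs\<in>shift_lists (Suc j) L. w hs)"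
    unfolding sum_shift_lists_Suc by (simp add: sum.distrib sum_distrib_left)
  also have "\<dots> \<le> real L ^ j * real L + 2 * (\<Sum>hs\<in>shift_lists (Suc j) L. w hs)"
    by (intro add_right_mono mult_right_mono card_shift_lists_le) auto
  finally have squares: "(\<Sum>hs\<in>shift_lists j L. (w hs)\<^sup>2)
                           \<le> real L ^ j * real L + 2 * (\<Sum>hs\<in>shift_lists (Suc j) L. w hs)" .
  have "(\<Sum>hs\<in>shift_lists j L. w hs)\<^sup>2 \<le> (\<Sum>hs\<in>shift_lists j L. (w hs)\<^sup>2) * card (shift_lists j L)"
    by (rule sum_squared_le_sum_of_squares)
  also have "\<dots> \<le> (real L ^ j * real L + 2 * (\<Sum>hs\<in>shift_lists (Suc j) L. w hs)) * real L ^ j"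
    using squares card_shift_lists_le by (intro mult_mono) (simp_all add: w_def sum_nonneg)
  finally show ?thesis by (simp add: algebra_simps)
qed

lemma weyl_bound_square_le:
  fixes x R R' C :: real and L j :: nat
  assumes "0 \<le> x" "x \<le> C * (real L ^ (2 ^ j - 1) + real L ^ (2 ^ j - j - 1) * R)"
    and "R\<^sup>2 \<le> real L ^ j * (real L ^ (j + 1) + 2 * R')" "L \<ge> 1"
  shows "x\<^sup>2 \<le> 4 * C\<^sup>2 * (real L ^ (2 ^ Suc j - 1) + real L ^ (2 ^ Suc j - Suc j - 1) * R')"
proof -
  define A where "A = real L ^ (2 ^ j - 1)"
  define a where "a = 2 ^ j - j - 1"
  have "j + 1 \<le> 2 ^ j" using less_exp[of j] by (simp add: Suc_le_eq)
  hence exps: "2 * a + 2 * j + 1 = 2 ^ Suc j - 1" "2 * a + j = 2 ^ Suc j - Suc j - 1"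
    "2 * (2 ^ j - 1) = (2::nat) ^ Suc j - 2"
    unfolding a_def by simp_all
  have "x\<^sup>2 \<le> (C * (A + real L ^ a * R))\<^sup>2"
    using assms(1,2) unfolding A_def a_def by (intro power_mono) auto
  also have "\<dots> \<le> 2 * C\<^sup>2 * (A\<^sup>2 + (real L ^ a)\<^sup>2 * R\<^sup>2)"
  proof -
    have "(A + real L ^ a * R)\<^sup>2 \<le> 2 * (A\<^sup>2 + (real L ^ a * R)\<^sup>2)"
      using zero_le_power2[of "A - real L ^ a * R"] by (simp add: power2_eq_square algebra_simps)
    from mult_left_mono[OF this, of "C\<^sup>2"] show ?thesis
      unfolding power_mult_distrib[of C] by (simp add: algebra_simps)
  qed
  also have "\<dots> \<le> 2 * C\<^sup>2 * (A\<^sup>2 + (real L ^ a)\<^sup>2 * (real L ^ j * (real L ^ (j + 1) + 2 * R')))"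
    using assms(3) by (intro mult_left_mono add_left_mono) auto
  also have "\<dots> = 2 * C\<^sup>2 * (A\<^sup>2 + real L ^ (2 * a + 2 * j + 1) + 2 * real L ^ (2 * a + j) * R')"
    by (simp add: power_add power_mult algebra_simps power2_eq_square)
  also have "\<dots> \<le> 2 * C\<^sup>2 * (real L ^ (2 ^ Suc j - 1) + real L ^ (2 * a + 2 * j + 1)
                                  + 2 * real L ^ (2 * a + j) * R')"
  proof (intro mult_left_mono add_right_mono)
    show "A\<^sup>2 \<le> real L ^ (2 ^ Suc j - 1)"
      using assms(4) unfolding A_def power_mult[symmetric] exps by (intro power_increasing) auto
  qed simp
  finally show ?thesis unfolding exps by (simp add: algebra_simps)
qed

lemma weyl_differencing:
  "\<exists>C>0. \<forall>L \<phi>. (norm (exp_sum L \<phi>)) ^ (2 ^ j)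
      \<le> C * (real L ^ (2 ^ j - 1) + real L ^ (2 ^ j - j - 1)
               * (\<Sum>hs\<in>shift_lists j L. norm (exp_sum (L - sum_list hs) (shift_diffs hs \<phi>))))"
proof (induction j)
  case 0 thus ?case by (intro exI[of _ 1]) auto
next
  case (Suc j)
  then obtain C where "C > 0" and IH: "\<And>L \<phi>. (norm (exp_sum L \<phi>)) ^ (2 ^ j)
      \<le> C * (real L ^ (2 ^ j - 1) + real L ^ (2 ^ j - j - 1)
               * (\<Sum>hs\<in>shift_lists j L. norm (exp_sum (L - sum_list hs) (shift_diffs hs \<phi>))))"
    by blast
  have "(norm (exp_sum L \<phi>)) ^ (2 ^ Suc j)
          \<le> 4 * C\<^sup>2 * (real L ^ (2 ^ Suc j - 1) + real L ^ (2 ^ Suc j - Suc j - 1)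
               * (\<Sum>hs\<in>shift_lists (Suc j) L. norm (exp_sum (L - sum_list hs) (shift_diffs hs \<phi>))))"
    for L \<phi>
  proof (cases "L = 0")
    case True thus ?thesis by (auto simp: power_0_left sum_nonneg)
  next
    case False
    have "(norm (exp_sum L \<phi>)) ^ (2 ^ Suc j) = ((norm (exp_sum L \<phi>)) ^ (2 ^ j))\<^sup>2"
      by (simp add: power_mult[symmetric] mult.commute)
    also have "\<dots> \<le> 4 * C\<^sup>2 * (real L ^ (2 ^ Suc j - 1) + real L ^ (2 ^ Suc j - Suc j - 1)
               * (\<Sum>hs\<in>shift_lists (Suc j) L. norm (exp_sum (L - sum_list hs) (shift_diffs hs \<phi>))))"
      using False by (intro weyl_bound_square_le[OF _ IH sum_shift_lists_square_le]) auto
    finally show ?thesis .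
  qed
  thus ?case using \<open>C > 0\<close> by (intro exI[of _ "4 * C\<^sup>2"]) auto
qed

section \<open>Iterated differences of real functions\<close>

fun iter_diff :: "nat list \<Rightarrow> (real \<Rightarrow> real) \<Rightarrow> real \<Rightarrow> real" where
  "iter_diff [] f = f"
| "iter_diff (h # hs) f = (\<lambda>x. iter_diff hs f (x + real h) - iter_diff hs f x)"

lemma shift_diffs_eq_iter_diff:
  assumes "\<And>i. \<phi> i = f (real (c + i))"
  shows "shift_diffs hs \<phi> i = iter_diff hs f (real (c + i))"
  using assms by (induction hs arbitrary: i) (simp_all add: shift_diff_def add.assoc)

lemma iter_diff_add: "iter_diff hs (\<lambda>x. f x + g x) x = iter_diff hs f x + iter_diff hs g x"
  by (induction hs arbitrary: x) auto

lemma iter_diff_cong: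
  assumes "\<And>y. x \<le> y \<Longrightarrow> y \<le> x + real (sum_list hs) \<Longrightarrow> f y = g y"
  shows "iter_diff hs f x = iter_diff hs g x"
  using assms
proof (induction hs arbitrary: x)
  case (Cons h hs)
  have "iter_diff hs f (x + real h) = iter_diff hs g (x + real h)" "iter_diff hs f x = iter_diff hs g x"
    by (rule Cons.IH; use Cons.prems in auto)+
  thus ?case by simp
qed simp

lemma iter_diff_has_real_derivative:
  assumes "\<And>y. y \<in> {a..b} \<Longrightarrow> (f has_real_derivative f' y) (at y within {a..b})"
    and "y \<in> {a..b - real (sum_list hs)}"
  shows "(iter_diff hs f has_real_derivative iter_diff hs f' y) (at y within {a..b - real (sum_list hs)})"
  using assms(2)
proof (induction hs arbitrary: y)
  case Nil thus ?case using assms(1) by simp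
next
  case (Cons h hs)
  let ?S = "{a..b - real (sum_list (h # hs))}"
  let ?T = "{a..b - real (sum_list hs)}"
  have "y + real h \<in> ?T" "y \<in> ?T" "?S \<subseteq> ?T" "(\<lambda>y. y + real h) ` ?S \<subseteq> ?T"
    using Cons.prems by auto
  have "(iter_diff hs f \<circ> (\<lambda>y. y + real h) has_real_derivative iter_diff hs f' (y + real h) * 1)
          (at y within ?S)"
    by (rule DERIV_image_chain, rule DERIV_subset[OF Cons.IH[OF \<open>y + real h \<in> ?T\<close>]])
      (use \<open>(\<lambda>y. y + real h) ` ?S \<subseteq> ?T\<close> in \<open>auto intro!: derivative_eq_intros\<close>)
  moreover have "(iter_diff hs f has_real_derivative iter_diff hs f' y) (at y within ?S)"
    by (rule DERIV_subset[OF Cons.IH[OF \<open>y \<in> ?T\<close>] \<open>?S \<subseteq> ?T\<close>])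
  ultimately have "((\<lambda>x. (iter_diff hs f \<circ> (\<lambda>y. y + real h)) x - iter_diff hs f x) has_real_derivative
                    iter_diff hs f' (y + real h) * 1 - iter_diff hs f' y) (at y within ?S)"
    by (rule DERIV_diff)
  thus ?case by (simp add: o_def)
qed

lemma iter_diff_mean_value:
  fixes D :: "nat \<Rightarrow> real \<Rightarrow> real"
  assumes "\<And>r y. r < length hs \<Longrightarrow> y \<in> {a..b}
             \<Longrightarrow> (D (m + r) has_real_derivative D (Suc (m + r)) y) (at y within {a..b})"
    and "a \<le> x" and "x + real (sum_list hs) \<le> b"
  shows "\<exists>\<xi>\<in>{a..b}. iter_diff hs (D m) x = real (prod_list hs) * D (m + length hs) \<xi>"
  using assms
proof (induction hs arbitrary: m x)
  case Nil thus ?case by (intro bexI[of _ x]) auto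
next
  case (Cons h hs)
  let ?\<psi> = "iter_diff hs (D m)"
  let ?\<psi>' = "iter_diff hs (D (Suc m))"
  show ?case
  proof (cases "h = 0")
    case True thus ?thesis using Cons.prems by (intro bexI[of _ x]) auto
  next
    case False
    have "\<exists>\<eta>\<in>{x<..<x + real h}. ?\<psi> (x + real h) - ?\<psi> x = (\<lambda>d. ?\<psi>' \<eta> * d) (x + real h - x)"
    proof (rule mvt_simple)
      fix y assume y: "x \<le> y" "y \<le> x + real h"
      have "(?\<psi> has_real_derivative ?\<psi>' y) (at y within {a..b - real (sum_list hs)})"
        using Cons.prems(1)[of 0] y Cons.prems by (intro iter_diff_has_real_derivative) auto
      hence "(?\<psi> has_real_derivative ?\<psi>' y) (at y within {x..x + real h})"
        by (rule DERIV_subset) (use Cons.prems in auto)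
      thus "(?\<psi> has_derivative (\<lambda>d. ?\<psi>' y * d)) (at y within {x..x + real h})"
        by (simp add: has_field_derivative_def)
    qed (use False in auto)
    then obtain \<eta> where \<eta>: "\<eta> \<in> {x<..<x + real h}" "?\<psi> (x + real h) - ?\<psi> x = ?\<psi>' \<eta> * real h"
      by auto
    have "\<exists>\<xi>\<in>{a..b}. ?\<psi>' \<eta> = real (prod_list hs) * D (Suc m + length hs) \<xi>"
      by (rule Cons.IH) (use \<eta> Cons.prems(1)[of "Suc _"] Cons.prems(2,3) in auto)
    thus ?thesis using \<eta> by auto
  qed
qed

lemma abs_iter_diff_le:
  fixes D :: "nat \<Rightarrow> real \<Rightarrow> real"
  assumes "\<And>r y. r < length hs \<Longrightarrow> y \<in> {a..b}
             \<Longrightarrow> (D r has_real_derivative D (Suc r) y) (at y within {a..b})"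
    and "\<And>y. y \<in> {a..b} \<Longrightarrow> \<bar>D (length hs) y\<bar> \<le> B"
    and "a \<le> x" and "x + real (sum_list hs) \<le> b"
  shows "\<bar>iter_diff hs (D 0) x\<bar> \<le> real (prod_list hs) * B"
proof -
  obtain \<xi> where "\<xi> \<in> {a..b}" "iter_diff hs (D 0) x = real (prod_list hs) * D (length hs) \<xi>"
    using iter_diff_mean_value[of hs a b D 0 x] assms(1,3,4) by auto
  thus ?thesis using assms(2) by (auto simp: abs_mult intro: mult_left_mono)
qed

lemma poly_higher_pderiv_degree:
  fixes p :: "real poly"
  assumes "degree p = k"
  shows "poly ((pderiv ^^ k) p) x = fact k * lead_coeff p"
proof -
  have "degree ((pderiv ^^ k) p) = 0"
    using assms by (simp add: degree_higher_pderiv)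
  hence "poly ((pderiv ^^ k) p) x = poly [:coeff ((pderiv ^^ k) p) 0:] x"
    by (simp only: degree_0_id)
  also have "\<dots> = coeff ((pderiv ^^ k) p) 0"
    by simp
  also have "\<dots> = fact k * lead_coeff p"
    using assms by (simp add: coeff_higher_pderiv pochhammer_fact)
  finally show ?thesis .
qed

lemma iter_diff_poly:
  fixes p :: "real poly"
  assumes "degree p = length hs"
  shows "iter_diff hs (poly p) x = real (prod_list hs) * fact (length hs) * lead_coeff p"
proof -
  obtain \<xi> where "iter_diff hs (poly ((pderiv ^^ 0) p)) x
                    = real (prod_list hs) * poly ((pderiv ^^ (0 + length hs)) p) \<xi>"
    using iter_diff_mean_value[of hs x "x + real (sum_list hs)" "\<lambda>r. poly ((pderiv ^^ r) p)" 0 x]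
    by (auto intro!: has_field_derivative_at_within poly_DERIV)
  thus ?thesis using assms by (simp add: poly_higher_pderiv_degree)
qed

section \<open>The divisor bound\<close>

definition divisor_count :: "nat \<Rightarrow> nat" where
  "divisor_count n = card {d. d dvd n}"

lemma divisor_count_1 [simp]: "divisor_count 1 = 1"
  unfolding divisor_count_def by simp

lemma divisor_count_mult_le:
  assumes "m > 0" "n > 0"
  shows "divisor_count (m * n) \<le> divisor_count m * divisor_count n"
proof -
  let ?f = "\<lambda>d. (gcd d m, d div gcd d m)"
  have "inj_on ?f {d. d dvd m * n}"
  proof (rule inj_onI)
    fix x y assume "?f x = ?f y"
    hence "gcd x m = gcd y m" "x div gcd x m = y div gcd y m" by auto
    thus "x = y" by (metis dvd_div_mult_self gcd_dvd1)
  qed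
  moreover have "d div gcd d m dvd n" if d: "d dvd m * n" for d
  proof -
    define g where "g = gcd d m"
    have "g > 0" unfolding g_def using assms by simp
    have "d = g * (d div g)" "m = g * (m div g)" unfolding g_def by auto
    hence "g * (d div g) dvd g * ((m div g) * n)" using d by (metis mult.assoc)
    hence "d div g dvd (m div g) * n" using \<open>g > 0\<close> by simp
    moreover have "coprime (d div g) (m div g)"
      unfolding g_def using assms by (intro div_gcd_coprime) auto
    ultimately show ?thesis by (simp add: coprime_dvd_mult_right_iff g_def)
  qed
  hence "?f ` {d. d dvd m * n} \<subseteq> {d. d dvd m} \<times> {d. d dvd n}" by auto
  ultimately have "card {d. d dvd m * n} \<le> card ({d. d dvd m} \<times> {d. d dvd n})"
    using assms by (intro card_inj_on_le) auto
  thus ?thesis unfolding divisor_count_def card_cartesian_product .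
qed

lemma divisor_count_prime_power:
  assumes "prime p"
  shows "divisor_count (p ^ a) = Suc a"
proof -
  have "{d. d dvd p ^ a} = (\<lambda>i. p ^ i) ` {..a}"
    using divides_primepow_nat[OF assms] by auto
  moreover have "inj_on (\<lambda>i. p ^ i) {..a}"
    using prime_gt_1_nat[OF assms] by (intro inj_onI) (simp add: power_inject_exp)
  ultimately show ?thesis unfolding divisor_count_def by (simp add: card_image)
qed

lemma prime_power_factor_exists:
  assumes "n > (1::nat)"
  obtains p a y where "prime p" "a \<ge> 1" "y \<ge> 1" "\<not> p dvd y" "n = p ^ a * y"
proof -
  obtain p where p: "prime p" "p dvd n" using prime_factor_nat[of n] assms by auto
  define a where "a = multiplicity p n"
  define y where "y = n div p ^ a"
  have "n = p ^ a * y" "\<not> p dvd y"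
    unfolding y_def a_def using multiplicity_decompose[of n p] multiplicity_dvd[of p n] assms
      prime_gt_1_nat[OF p(1)] by auto
  moreover have "a \<ge> 1"
    unfolding a_def using p assms prime_gt_1_nat[OF p(1)] by (simp add: Suc_le_eq multiplicity_gt_zero_iff)
  moreover have "y \<ge> 1" using \<open>n = p ^ a * y\<close> assms by (cases y) auto
  ultimately show ?thesis using that p(1) by blast
qed

text \<open>The local factor (a + 1) / p^(a\<delta>) of d(n) / n^\<delta> is at most 1 when p^\<delta> \<ge> 2, and is
  bounded uniformly in a and p otherwise; only boundedly many primes have p^\<delta> < 2.\<close>

lemma Suc_le_powr_power:
  assumes "\<delta> > 0" "p \<ge> 2"
  shows "real (Suc a)
           \<le> (if real p powr \<delta> < 2 then max 1 (1 / (\<delta> * ln 2)) else 1) * (real p powr \<delta>) ^ a"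
proof (cases "real p powr \<delta> < 2")
  case True
  define t where "t = \<delta> * ln 2"
  have "t > 0" unfolding t_def using assms by simp
  have "real (Suc a) \<le> max 1 (1 / t) * (1 + real a * t)"
  proof (cases "t \<ge> 1")
    case True thus ?thesis by (simp add: mult_le_cancel_left1)
  next
    case False thus ?thesis using \<open>t > 0\<close> by (simp add: field_simps)
  qed
  also have "1 + real a * t \<le> 1 + real a * (\<delta> * ln (real p))"
    unfolding t_def using assms by (intro add_left_mono mult_left_mono) auto
  also have "\<dots> \<le> exp (real a * (\<delta> * ln (real p)))"
    by (rule exp_ge_add_one_self)
  also have "\<dots> = (real p powr \<delta>) ^ a"
    using assms by (simp add: powr_def exp_of_nat_mult[symmetric])
  finally show ?thesis using True unfolding t_def by (simp add: mult_left_mono)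
next
  case False
  have "real (Suc a) \<le> 2 ^ a" by (induction a) auto
  also have "\<dots> \<le> (real p powr \<delta>) ^ a" using False by (intro power_mono) auto
  finally show ?thesis using False by simp
qed

lemma divisor_count_le_small_primes_powr:
  assumes "\<delta> > 0" "n \<ge> 1"
  defines "c \<equiv> max 1 (1 / (\<delta> * ln 2))"
  shows "real (divisor_count n)
           \<le> c ^ card {p. prime p \<and> p dvd n \<and> real p powr \<delta> < 2} * real n powr \<delta>"
  using assms(2)
proof (induction n rule: less_induct)
  case (less n)
  let ?S = "\<lambda>n. {p. prime p \<and> p dvd n \<and> real p powr \<delta> < 2}"
  have "c \<ge> 1" unfolding c_def by simp
  show ?case
  proof (cases "n = 1")
    case True
    have "?S 1 = {}" by auto
    thus ?thesis using True by (simp only: divisor_count_1 card.empty power_0) simp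
  next
    case False
    then obtain p a y where p: "prime p" "a \<ge> 1" "y \<ge> 1" "\<not> p dvd y" and n: "n = p ^ a * y"
      using less.prems prime_power_factor_exists[of n] by auto
    have "p \<ge> 2" using p prime_ge_2_nat by blast
    hence "p ^ a \<ge> 2" using \<open>a \<ge> 1\<close> power_increasing[of 1 a p] by simp
    hence "y < n" using n \<open>y \<ge> 1\<close> by simp
    have "finite (?S n)"
      by (rule finite_subset[of _ "{..n}"]) (use less.prems in \<open>auto dest: dvd_imp_le\<close>)
    have sub: "?S y \<subseteq> ?S n" unfolding n by auto
    define f where "f = (if real p powr \<delta> < 2 then c else 1)"
    have "f * c ^ card (?S y) \<le> c ^ card (?S n)"
    proof (cases "real p powr \<delta> < 2")
      case True
      have "p dvd n" unfolding n using \<open>a \<ge> 1\<close> by (intro dvd_mult2 dvd_power) auto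
      hence "p \<in> ?S n - ?S y" using True p by auto
      hence "?S y \<subset> ?S n" using sub by blast
      hence "card (?S y) + 1 \<le> card (?S n)"
        using \<open>finite (?S n)\<close> by (simp add: psubset_card_mono Suc_le_eq)
      thus ?thesis using True \<open>c \<ge> 1\<close> power_increasing[of "card (?S y) + 1" "card (?S n)" c]
        by (simp add: f_def mult.commute)
    next
      case False
      thus ?thesis using \<open>c \<ge> 1\<close> card_mono[OF \<open>finite (?S n)\<close> sub]
        by (simp add: f_def power_increasing)
    qed
    have "divisor_count n \<le> Suc a * divisor_count y"
      using divisor_count_mult_le[of "p ^ a" y] \<open>p \<ge> 2\<close> \<open>y \<ge> 1\<close>
      unfolding n divisor_count_prime_power[OF p(1)] by simp
    hence "real (divisor_count n) \<le> real (Suc a) * real (divisor_count y)"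
      by (metis of_nat_le_iff of_nat_mult)
    also have "\<dots> \<le> real (Suc a) * (c ^ card (?S y) * real y powr \<delta>)"
      using less.IH[OF \<open>y < n\<close> \<open>y \<ge> 1\<close>] by (intro mult_left_mono) auto
    also have "\<dots> \<le> f * (real p powr \<delta>) ^ a * (c ^ card (?S y) * real y powr \<delta>)"
      using Suc_le_powr_power[OF assms(1) \<open>p \<ge> 2\<close>, of a] \<open>c \<ge> 1\<close>
      unfolding f_def c_def by (intro mult_right_mono) auto
    also have "\<dots> = f * c ^ card (?S y) * real n powr \<delta>"
    proof -
      have "real (p ^ a) powr \<delta> = (real p powr real a) powr \<delta>"
        using \<open>p \<ge> 2\<close> by (simp add: powr_realpow)
      also have "\<dots> = (real p powr \<delta>) powr real a"
        by (simp add: powr_powr mult.commute)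
      also have "\<dots> = (real p powr \<delta>) ^ a"
        using \<open>p \<ge> 2\<close> by (simp add: powr_realpow)
      finally show ?thesis unfolding n of_nat_mult by (simp add: powr_mult mult_ac)
    qed
    also have "\<dots> \<le> c ^ card (?S n) * real n powr \<delta>"
      using \<open>f * c ^ card (?S y) \<le> c ^ card (?S n)\<close> by (intro mult_right_mono) auto
    finally show ?thesis .
  qed
qed

lemma divisor_count_le_powr:
  fixes \<delta> :: real
  assumes "\<delta> > 0"
  shows "\<exists>C>0. \<forall>n\<ge>1. real (divisor_count n) \<le> C * real n powr \<delta>"
proof -
  define c where "c = max 1 (1 / (\<delta> * ln 2))"
  define N where "N = nat \<lceil>2 powr (1 / \<delta>)\<rceil>"
  have "c \<ge> 1" unfolding c_def by simp
  show ?thesis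
  proof (intro exI[of _ "c ^ Suc N"] conjI allI impI)
    show "c ^ Suc N > 0" using \<open>c \<ge> 1\<close> by simp
    fix n :: nat assume "n \<ge> 1"
    let ?S = "{p. prime p \<and> p dvd n \<and> real p powr \<delta> < 2}"
    have "?S \<subseteq> {..N}"
    proof
      fix p assume "p \<in> ?S"
      hence p: "prime p" "real p powr \<delta> < 2" by auto
      have "real p = (real p powr \<delta>) powr (1 / \<delta>)"
        using assms p by (simp add: powr_powr prime_gt_0_nat)
      also have "\<dots> \<le> 2 powr (1 / \<delta>)"
        using assms p by (intro powr_mono2) auto
      finally have "int p \<le> \<lceil>2 powr (1 / \<delta>)\<rceil>"
        using ceiling_mono[of "real p"] by fastforce
      thus "p \<in> {..N}" unfolding N_def by (simp add: le_nat_iff)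
    qed
    hence "c ^ card ?S \<le> c ^ Suc N"
      using \<open>c \<ge> 1\<close> card_mono[of "{..N}" ?S] by (intro power_increasing) auto
    thus "real (divisor_count n) \<le> c ^ Suc N * real n powr \<delta>"
      using divisor_count_le_small_primes_powr[OF assms \<open>n \<ge> 1\<close>] unfolding c_def[symmetric]
      by (meson mult_right_mono powr_ge_zero order.trans)
  qed
qed

section \<open>Regrouping the differenced sums by the product of the shifts\<close>

lemma prod_list_shift_lists_le: "hs \<in> shift_lists j L \<Longrightarrow> prod_list hs \<le> L ^ j"
proof -
  assume hs: "hs \<in> shift_lists j L"
  hence "\<forall>h\<in>set hs. h \<le> L" unfolding shift_lists_def by auto
  hence "prod_list hs \<le> L ^ length hs" by (induction hs) (auto intro: mult_le_mono)
  thus ?thesis using hs unfolding shift_lists_def by simp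
qed

lemma prod_list_shift_lists_pos: "hs \<in> shift_lists j L \<Longrightarrow> prod_list hs > 0"
  unfolding shift_lists_def using prod_list_zero_iff[of hs] by (auto simp: subset_iff)

lemma card_shift_lists_prod_eq_le:
  assumes "t > 0"
  shows "card {hs \<in> shift_lists j L. K * prod_list hs = t} \<le> divisor_count t ^ j"
proof -
  have "set hs \<subseteq> {d. d dvd t} \<and> length hs = j"
    if hs: "hs \<in> shift_lists j L" "K * prod_list hs = t" for hs
  proof -
    have "h dvd t" if "h \<in> set hs" for h
      using dvd_trans[OF prod_list_dvd[OF that] dvd_triv_right[of _ K]] hs(2) by simp
    thus ?thesis using hs(1) unfolding shift_lists_def by auto
  qed
  hence "{hs \<in> shift_lists j L. K * prod_list hs = t} \<subseteq> {hs. set hs \<subseteq> {d. d dvd t} \<and> length hs = j}"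
    by blast
  moreover have "finite {hs. set hs \<subseteq> {d. d dvd t} \<and> length hs = j}"
    using assms by (intro finite_lists_length_eq) simp
  ultimately have "card {hs \<in> shift_lists j L. K * prod_list hs = t}
                     \<le> card {hs. set hs \<subseteq> {d. d dvd t} \<and> length hs = j}"
    by (rule card_mono[rotated])
  thus ?thesis
    unfolding divisor_count_def using card_lists_length_eq[of "{d. d dvd t}" j] assms by simp
qed

lemma sum_shift_lists_prod_le:
  fixes F :: "nat \<Rightarrow> real"
  assumes "\<And>t. F t \<ge> 0" and "K \<ge> 1"
  shows "(\<Sum>hs\<in>shift_lists j L. F (K * prod_list hs))
           \<le> (\<Sum>t\<in>{1..K * L ^ j}. real (divisor_count t ^ j) * F t)"
proof -
  let ?f = "\<lambda>hs. K * prod_list hs"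
  have range: "?f ` shift_lists j L \<subseteq> {1..K * L ^ j}"
  proof (rule image_subsetI)
    fix hs assume "hs \<in> shift_lists j L"
    hence "1 \<le> prod_list hs" "prod_list hs \<le> L ^ j"
      using prod_list_shift_lists_pos prod_list_shift_lists_le by (auto simp: Suc_le_eq)
    thus "?f hs \<in> {1..K * L ^ j}" using assms(2) by (simp add: one_le_mult_iff)
  qed
  have "(\<Sum>hs\<in>shift_lists j L. F (?f hs))
          = (\<Sum>t\<in>?f ` shift_lists j L. \<Sum>hs\<in>{hs \<in> shift_lists j L. ?f hs = t}. F (?f hs))"
    by (rule sum.image_gen[OF finite_shift_lists])
  also have "\<dots> = (\<Sum>t\<in>?f ` shift_lists j L. real (card {hs \<in> shift_lists j L. ?f hs = t}) * F t)"
    by (intro sum.cong refl) simp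
  also have "\<dots> \<le> (\<Sum>t\<in>?f ` shift_lists j L. real (divisor_count t ^ j) * F t)"
  proof (intro sum_mono mult_right_mono)
    fix t assume "t \<in> ?f ` shift_lists j L"
    hence "t > 0" using range by auto
    thus "real (card {hs \<in> shift_lists j L. ?f hs = t}) \<le> real (divisor_count t ^ j)"
      using card_shift_lists_prod_eq_le by (simp only: of_nat_le_iff)
  qed (use assms in auto)
  also have "\<dots> \<le> (\<Sum>t\<in>{1..K * L ^ j}. real (divisor_count t ^ j) * F t)"
    using range assms(1) by (intro sum_mono2) auto
  finally show ?thesis .
qed

lemma divisor_count_power_le_powr:
  fixes \<epsilon> :: real
  assumes "\<epsilon> > 0" and "K \<ge> 1"
  shows "\<exists>B\<ge>0. \<forall>L t. L \<ge> 1 \<longrightarrow> t \<in> {1..K * L ^ j} \<longrightarrow> real (divisor_count t ^ j) \<le> B * real L powr \<epsilon>"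
proof -
  have "real j * real j + 1 > 0" by (auto intro!: add_nonneg_pos)
  define \<delta> where "\<delta> = \<epsilon> / (real j * real j + 1)"
  have "\<delta> > 0" unfolding \<delta>_def using assms \<open>real j * real j + 1 > 0\<close> by simp
  then obtain Cd where "Cd > 0" and Cd: "\<And>n. n \<ge> 1 \<Longrightarrow> real (divisor_count n) \<le> Cd * real n powr \<delta>"
    using divisor_count_le_powr by blast
  define B where "B = Cd ^ j * real K powr (\<delta> * real j)"
  have "real (divisor_count t ^ j) \<le> B * real L powr \<epsilon>" if "L \<ge> 1" "t \<in> {1..K * L ^ j}" for L t
  proof -
    have "real t \<le> real K * real L ^ j"
      using that by (metis atLeastAtMost_iff of_nat_le_iff of_nat_mult of_nat_power)
    hence "real (divisor_count t) ^ j \<le> (Cd * (real K * real L ^ j) powr \<delta>) ^ j"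
      using that Cd[of t] \<open>\<delta> > 0\<close> \<open>Cd > 0\<close>
      by (intro power_mono order.trans[OF Cd] mult_left_mono powr_mono2) auto
    also have "real L ^ j = real L powr real j"
      using \<open>L \<ge> 1\<close> by (simp add: powr_realpow)
    also have "(Cd * (real K * real L powr real j) powr \<delta>) ^ j = B * real L powr (real j * real j * \<delta>)"
      using \<open>L \<ge> 1\<close> assms(2) unfolding B_def
      by (simp add: power_mult_distrib powr_mult powr_powr powr_power mult_ac)
    also have "\<dots> \<le> B * real L powr \<epsilon>"
    proof (intro mult_left_mono powr_mono)
      have "\<epsilon> * (real j * real j / (real j * real j + 1)) \<le> \<epsilon>"
        using assms(1) \<open>real j * real j + 1 > 0\<close> by (intro mult_left_le) (auto simp: divide_le_eq)
      thus "real j * real j * \<delta> \<le> \<epsilon>" unfolding \<delta>_def by (simp add: mult_ac)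
    qed (use \<open>L \<ge> 1\<close> \<open>Cd > 0\<close> in \<open>simp_all add: B_def\<close>)
    finally show ?thesis by simp
  qed
  moreover have "B \<ge> 0" unfolding B_def using \<open>Cd > 0\<close> by simp
  ultimately show ?thesis by blast
qed

lemma sum_shift_lists_prod_le_powr:
  fixes \<epsilon> :: real
  assumes "\<epsilon> > 0" and "K \<ge> 1"
  shows "\<exists>B\<ge>0. \<forall>L F. L \<ge> 1 \<longrightarrow> (\<forall>t. F t \<ge> 0) \<longrightarrow>
           (\<Sum>hs\<in>shift_lists j L. F (K * prod_list hs))
             \<le> B * real L powr \<epsilon> * (\<Sum>t\<in>{1..K * L ^ j}. F t)"
proof -
  obtain B where "B \<ge> 0" and divisor_bound: "\<And>L t. L \<ge> 1 \<Longrightarrow> t \<in> {1..K * L ^ j}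
                   \<Longrightarrow> real (divisor_count t ^ j) \<le> B * real L powr \<epsilon>"
    using divisor_count_power_le_powr[OF assms] by blast
  have "(\<Sum>hs\<in>shift_lists j L. F (K * prod_list hs)) \<le> B * real L powr \<epsilon> * (\<Sum>t\<in>{1..K * L ^ j}. F t)"
    if "L \<ge> 1" "\<forall>t. F t \<ge> 0" for L F
  proof -
    have "(\<Sum>hs\<in>shift_lists j L. F (K * prod_list hs))
            \<le> (\<Sum>t\<in>{1..K * L ^ j}. real (divisor_count t ^ j) * F t)"
      using that assms(2) by (intro sum_shift_lists_prod_le) auto
    also have "\<dots> \<le> (\<Sum>t\<in>{1..K * L ^ j}. B * real L powr \<epsilon> * F t)"
      using divisor_bound[OF \<open>L \<ge> 1\<close>] that(2) by (intro sum_mono mult_right_mono) auto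
    finally show ?thesis by (simp add: sum_distrib_left)
  qed
  with \<open>B \<ge> 0\<close> show ?thesis by blast
qed

section \<open>Bounding a single differenced sum\<close>

lemma shift_diffs_poly_plus_diff:
  fixes P :: "real poly" and g :: "real \<Rightarrow> real" and c :: nat
  assumes "degree P = Suc (length hs)"
  defines "\<phi> \<equiv> \<lambda>i. poly P (real (c + i)) + g (real (c + i))"
  shows "shift_diffs hs \<phi> (Suc i) - shift_diffs hs \<phi> i
           = real (fact (Suc (length hs)) * prod_list hs) * lead_coeff P + iter_diff (1 # hs) g (real (c + i))"
proof -
  have "shift_diffs hs \<phi> n = iter_diff hs (\<lambda>x. poly P x + g x) (real (c + n))" for n
    unfolding \<phi>_def by (rule shift_diffs_eq_iter_diff) simp
  hence "shift_diffs hs \<phi> (Suc i) - shift_diffs hs \<phi> i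
           = iter_diff (1 # hs) (\<lambda>x. poly P x + g x) (real (c + i))"
    by (simp add: add_ac)
  also have "\<dots> = iter_diff (1 # hs) (poly P) (real (c + i)) + iter_diff (1 # hs) g (real (c + i))"
    by (rule iter_diff_add)
  also have "iter_diff (1 # hs) (poly P) (real (c + i))
               = real (prod_list (1 # hs)) * fact (length (1 # hs)) * lead_coeff P"
    using assms(1) by (intro iter_diff_poly) simp
  finally show ?thesis by (simp add: mult_ac del: fact_Suc iter_diff.simps)
qed

lemma sum_abs_iter_diff_le:
  fixes X k :: nat and g :: "real \<Rightarrow> real" and D :: "nat \<Rightarrow> real \<Rightarrow> real"
  assumes "X \<ge> 1" "k \<ge> 1" "hs \<in> shift_lists (k - 1) X" "B \<ge> 0"
    and "\<forall>x\<in>{real X..2 * real X}. D 0 x = g x"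
    and "\<forall>r<k. \<forall>x\<in>{real X..2 * real X}.
           (D r has_real_derivative D (Suc r) x) (at x within {real X..2 * real X})"
    and "\<forall>x\<in>{real X..2 * real X}. \<bar>D k x\<bar> \<le> B * real X powr (- real k)"
  shows "(\<Sum>i<X - sum_list hs - 1. \<bar>iter_diff (1 # hs) g (real (X + 1 + i))\<bar>) \<le> B"
proof -
  have len: "length (1 # hs) = k" using assms(2,3) unfolding shift_lists_def by simp
  have "\<bar>iter_diff (1 # hs) g (real (X + 1 + i))\<bar> \<le> real (prod_list hs) * (B * real X powr (- real k))"
    if "i < X - sum_list hs - 1" for i
  proof -
    have range: "real X \<le> real (X + 1 + i)" "real (X + 1 + i) + real (sum_list (1 # hs)) \<le> 2 * real X"
      using that by auto
    have "iter_diff (1 # hs) g (real (X + 1 + i)) = iter_diff (1 # hs) (D 0) (real (X + 1 + i))"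
      using assms(5) range by (intro iter_diff_cong) auto
    also have "\<bar>\<dots>\<bar> \<le> real (prod_list (1 # hs)) * (B * real X powr (- real k))"
      using assms(6,7) range len by (intro abs_iter_diff_le[of _ "real X" "2 * real X"]) auto
    finally show ?thesis by simp
  qed
  hence "(\<Sum>i<X - sum_list hs - 1. \<bar>iter_diff (1 # hs) g (real (X + 1 + i))\<bar>)
           \<le> (\<Sum>i<X - sum_list hs - 1. real (prod_list hs) * (B * real X powr (- real k)))"
    by (intro sum_mono) simp
  also have "\<dots> = real (X - sum_list hs - 1) * real (prod_list hs) * (B * real X powr (- real k))"
    by simp
  also have "\<dots> \<le> real X * real X ^ (k - 1) * (B * real X powr (- real k))"
    using prod_list_shift_lists_le[OF assms(3)] assms(4)
    by (intro mult_right_mono mult_mono) (auto simp flip: of_nat_power)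
  also have "\<dots> = B"
    using assms(1,2) by (simp add: powr_minus powr_realpow field_simps flip: power_Suc)
  finally show ?thesis .
qed

lemma norm_exp_sum_shift_diffs_le:
  fixes X k :: nat and P :: "real poly" and g :: "real \<Rightarrow> real" and D :: "nat \<Rightarrow> real \<Rightarrow> real"
  assumes "X \<ge> 1" "k \<ge> 1" "degree P = k" "hs \<in> shift_lists (k - 1) X" "B \<ge> 0"
    and "\<forall>x\<in>{real X..2 * real X}. D 0 x = g x"
    and "\<forall>r<k. \<forall>x\<in>{real X..2 * real X}.
           (D r has_real_derivative D (Suc r) x) (at x within {real X..2 * real X})"
    and "\<forall>x\<in>{real X..2 * real X}. \<bar>D k x\<bar> \<le> B * real X powr (- real k)"
  shows "norm (exp_sum (X - sum_list hs)
                 (shift_diffs hs (\<lambda>i. poly P (real (X + 1 + i)) + g (real (X + 1 + i)))))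
           \<le> min_recip (real X) (real (fact k * prod_list hs) * lead_coeff P) * (1 + 2 * pi * B)"
proof -
  define \<beta> where "\<beta> = real (fact k * prod_list hs) * lead_coeff P"
  define \<delta> where "\<delta> i = iter_diff (1 # hs) g (real (X + 1 + i))" for i
  have "length (1 # hs) = k" using assms(2,4) unfolding shift_lists_def by simp
  hence "shift_diffs hs (\<lambda>i. poly P (real (X + 1 + i)) + g (real (X + 1 + i))) (Suc i)
           - shift_diffs hs (\<lambda>i. poly P (real (X + 1 + i)) + g (real (X + 1 + i))) i = \<beta> + \<delta> i" for i
    using shift_diffs_poly_plus_diff[where c = "X + 1" and g = g and i = i] assms(3)
    unfolding \<delta>_def \<beta>_def by (simp del: fact_Suc iter_diff.simps)
  hence "norm (exp_sum (X - sum_list hs)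
                 (shift_diffs hs (\<lambda>i. poly P (real (X + 1 + i)) + g (real (X + 1 + i)))))
           \<le> min_recip (real X) \<beta> * (1 + 2 * pi * (\<Sum>i<X - sum_list hs - 1. \<bar>\<delta> i\<bar>))"
    unfolding exp_sum_def by (intro norm_sum_e_almost_linear_le) auto
  also have "\<dots> \<le> min_recip (real X) \<beta> * (1 + 2 * pi * B)"
    using sum_abs_iter_diff_le[OF assms(1,2,4,5,6,7,8)] unfolding \<delta>_def
    by (intro mult_left_mono min_recip_nonneg) auto
  finally show ?thesis unfolding \<beta>_def .
qed

lemma power_diff_mult_powr:
  fixes x :: real
  assumes "x > 0" "n \<le> m"
  shows "x ^ (m - n) * x powr \<epsilon> = x powr (real m - real n + \<epsilon>)"
  using assms by (simp add: powr_add of_nat_diff flip: powr_realpow)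

lemma sum_norm_exp_sum_shift_diffs_le:
  fixes X k :: nat and P :: "real poly" and g :: "real \<Rightarrow> real" and D :: "nat \<Rightarrow> real \<Rightarrow> real"
  assumes "X \<ge> 1" "k \<ge> 1" "G \<ge> 0" "c \<ge> 0" "degree P = k"
    and regroup: "\<And>F. (\<forall>t. F t \<ge> 0) \<Longrightarrow> (\<Sum>hs\<in>shift_lists (k - 1) X. F (fact k * prod_list hs))
                       \<le> B * real X powr \<epsilon> * (\<Sum>t\<in>{1..fact k * X ^ (k - 1)}. F t)"
    and "\<forall>x\<in>{real X..2 * real X}. D 0 x = g x"
    and "\<forall>r<k. \<forall>x\<in>{real X..2 * real X}.
           (D r has_real_derivative D (Suc r) x) (at x within {real X..2 * real X})"
    and "\<forall>x\<in>{real X..2 * real X}. \<bar>D k x\<bar> \<le> c * G * real X powr (- real k)"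
  shows "(\<Sum>hs\<in>shift_lists (k - 1) X. norm (exp_sum (X - sum_list hs)
           (shift_diffs hs (\<lambda>i. poly P (real (X + 1 + i)) + g (real (X + 1 + i))))))
         \<le> (1 + 2 * pi * c) * (1 + G) * B * real X powr \<epsilon>
             * (\<Sum>t\<in>{1..fact k * X ^ (k - 1)}. min_recip (real X) (real t * lead_coeff P))"
proof -
  define m where "m t = min_recip (real X) (real t * lead_coeff P)" for t :: nat
  have "m t \<ge> 0" for t by (simp add: m_def min_recip_nonneg)
  have "(\<Sum>hs\<in>shift_lists (k - 1) X. norm (exp_sum (X - sum_list hs)
           (shift_diffs hs (\<lambda>i. poly P (real (X + 1 + i)) + g (real (X + 1 + i))))))
          \<le> (1 + 2 * pi * (c * G)) * (\<Sum>hs\<in>shift_lists (k - 1) X. m (fact k * prod_list hs))"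
    using norm_exp_sum_shift_diffs_le[OF assms(1,2,5) _ _ assms(7-9)] assms(3,4)
    unfolding m_def sum_distrib_left by (intro sum_mono) (simp add: mult.commute)
  also have "\<dots> \<le> (1 + 2 * pi * (c * G)) * (B * real X powr \<epsilon> * (\<Sum>t\<in>{1..fact k * X ^ (k - 1)}. m t))"
    using \<open>\<And>t. m t \<ge> 0\<close> assms(3,4) by (intro mult_left_mono regroup) auto
  also have "\<dots> \<le> (1 + 2 * pi * c) * (1 + G) * (B * real X powr \<epsilon> * (\<Sum>t\<in>{1..fact k * X ^ (k - 1)}. m t))"
  proof (rule mult_right_mono)
    show "1 + 2 * pi * (c * G) \<le> (1 + 2 * pi * c) * (1 + G)"
      using assms(3,4) by (simp add: algebra_simps)
    have "0 \<le> (\<Sum>hs\<in>shift_lists (k - 1) X. m (fact k * prod_list hs))"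
      using \<open>\<And>t. m t \<ge> 0\<close> by (simp add: sum_nonneg)
    also have "\<dots> \<le> B * real X powr \<epsilon> * (\<Sum>t\<in>{1..fact k * X ^ (k - 1)}. m t)"
      using \<open>\<And>t. m t \<ge> 0\<close> by (intro regroup) auto
    finally show "0 \<le> B * real X powr \<epsilon> * (\<Sum>t\<in>{1..fact k * X ^ (k - 1)}. m t)" .
  qed
  finally show ?thesis unfolding m_def by (simp add: mult_ac)
qed

lemma norm_sum_e_poly_plus_smooth_le:
  fixes X k :: nat and P :: "real poly" and g :: "real \<Rightarrow> real" and D :: "nat \<Rightarrow> real \<Rightarrow> real"
  assumes weyl: "\<And>\<phi>. (norm (exp_sum X \<phi>)) ^ (2 ^ (k - 1))
      \<le> Cw * (real X ^ (2 ^ (k - 1) - 1) + real X ^ (2 ^ (k - 1) - (k - 1) - 1)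
         * (\<Sum>hs\<in>shift_lists (k - 1) X. norm (exp_sum (X - sum_list hs) (shift_diffs hs \<phi>))))"
    and regroup: "\<And>F. (\<forall>t. F t \<ge> 0) \<Longrightarrow> (\<Sum>hs\<in>shift_lists (k - 1) X. F (fact k * prod_list hs))
                       \<le> B * real X powr \<epsilon> * (\<Sum>t\<in>{1..fact k * X ^ (k - 1)}. F t)"
    and "Cw \<ge> 0" "B \<ge> 0" "X \<ge> 1" "k \<ge> 1" "G \<ge> 0" "c \<ge> 0" "degree P = k"
    and "\<forall>x\<in>{real X..2 * real X}. D 0 x = g x"
    and "\<forall>r<k. \<forall>x\<in>{real X..2 * real X}.
           (D r has_real_derivative D (Suc r) x) (at x within {real X..2 * real X})"
    and "\<forall>x\<in>{real X..2 * real X}. \<bar>D k x\<bar> \<le> c * G * real X powr (- real k)"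
  shows "norm (\<Sum>n\<in>{X<..2*X}. e (poly P (real n) + g (real n))) ^ (2 ^ (k - 1))
           \<le> Cw * (1 + (1 + 2 * pi * c) * B) * (real X ^ (2 ^ (k - 1) - 1)
                + (1 + G) * real X powr (real (2 ^ (k - 1)) - real k + \<epsilon>)
                  * (\<Sum>t\<in>{1..fact k * X ^ (k - 1)}. min_recip (real X) (real t * lead_coeff P)))"
proof -
  define \<phi> where "\<phi> i = poly P (real (X + 1 + i)) + g (real (X + 1 + i))" for i
  define M where "M = (1 + 2 * pi * c) * B"
  define A where "A = real X ^ (2 ^ (k - 1) - 1)"
  define Q where "Q = (1 + G) * real X powr (real (2 ^ (k - 1)) - real k + \<epsilon>)
                      * (\<Sum>t\<in>{1..fact k * X ^ (k - 1)}. min_recip (real X) (real t * lead_coeff P))"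
  have "M \<ge> 0" "A \<ge> 0" "Q \<ge> 0"
    using assms(4,7,8) by (simp_all add: M_def A_def Q_def sum_nonneg min_recip_nonneg)
  have "k - 1 < 2 ^ (k - 1)" by (rule less_exp)
  hence exps: "2 ^ (k - 1) - (k - 1) - 1 = 2 ^ (k - 1) - k" "k \<le> 2 ^ (k - 1)"
    using assms(6) by arith+
  have "(\<Sum>n\<in>{X<..2*X}. e (poly P (real n) + g (real n))) = exp_sum X \<phi>"
    unfolding exp_sum_def \<phi>_def
    by (rule sum.reindex_bij_witness[where i = "\<lambda>i. X + 1 + i" and j = "\<lambda>n. n - (X + 1)"]) auto
  hence "(norm (\<Sum>n\<in>{X<..2*X}. e (poly P (real n) + g (real n)))) ^ (2 ^ (k - 1))
      \<le> Cw * (A + real X ^ (2 ^ (k - 1) - k)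
                 * (\<Sum>hs\<in>shift_lists (k - 1) X. norm (exp_sum (X - sum_list hs) (shift_diffs hs \<phi>))))"
    using weyl[of \<phi>] exps(1) unfolding A_def by simp
  also have "\<dots> \<le> Cw * (A + real X ^ (2 ^ (k - 1) - k) * (M * (1 + G) * real X powr \<epsilon>
                * (\<Sum>t\<in>{1..fact k * X ^ (k - 1)}. min_recip (real X) (real t * lead_coeff P))))"
    using sum_norm_exp_sum_shift_diffs_le[OF assms(5,6,7,8,9) regroup assms(10-12)] assms(3)
    unfolding \<phi>_def M_def by (intro mult_left_mono add_left_mono) (auto simp: mult_ac)
  also have "\<dots> = Cw * (A + M * Q)"
    using power_diff_mult_powr[of "real X" k "2 ^ (k - 1)" \<epsilon>] assms(5) exps(2)
    unfolding Q_def by (simp add: mult_ac)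
  also have "\<dots> \<le> Cw * (1 + M) * (A + Q)"
    using assms(3) \<open>M \<ge> 0\<close> \<open>A \<ge> 0\<close> \<open>Q \<ge> 0\<close> by (simp add: algebra_simps)
  finally show ?thesis unfolding A_def Q_def M_def by (simp add: mult.assoc)
qed

theorem lemma5p5:
  fixes k :: nat and \<epsilon> c1 c2 :: real
  assumes "k \<ge> 1" and "\<epsilon> > 0" and "c1 > 0" and "c2 > 0"
  shows "\<exists>C G0 X0. \<forall>(X::nat) (G::real) (P::real poly) (g::real \<Rightarrow> real) (D::nat \<Rightarrow> real \<Rightarrow> real).
     real X \<ge> X0 \<longrightarrow> G \<ge> G0 \<longrightarrow> degree P = k \<longrightarrow>
     (\<forall>x\<in>{real X..2 * real X}. D 0 x = g x) \<longrightarrow>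
     (\<forall>r<k. \<forall>x\<in>{real X..2 * real X}.
        (D r has_real_derivative D (Suc r) x) (at x within {real X..2 * real X})) \<longrightarrow>
     continuous_on {real X..2 * real X} (D k) \<longrightarrow>
     (\<forall>r\<in>{1..k}. \<forall>x\<in>{real X..2 * real X}.
        c1 * G * real X powr (- real r) \<le> \<bar>D r x\<bar> \<and>
        \<bar>D r x\<bar> \<le> c2 * G * real X powr (- real r)) \<longrightarrow>
     norm (\<Sum>n\<in>{X<..2*X}. e (poly P (real n) + g (real n))) ^ (2 ^ (k - 1))
       \<le> C * (real X ^ (2 ^ (k - 1) - 1)
              + (1 + G) * real X powr (real (2 ^ (k - 1)) - real k + \<epsilon>)
                * (\<Sum>t\<in>{1..fact k * X ^ (k - 1)}. min_recip (real X) (real t * lead_coeff P)))"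
proof -
  obtain Cw where "Cw > 0" and weyl: "\<And>L \<phi>. (norm (exp_sum L \<phi>)) ^ (2 ^ (k - 1))
      \<le> Cw * (real L ^ (2 ^ (k - 1) - 1) + real L ^ (2 ^ (k - 1) - (k - 1) - 1)
         * (\<Sum>hs\<in>shift_lists (k - 1) L. norm (exp_sum (L - sum_list hs) (shift_diffs hs \<phi>))))"
    using weyl_differencing[of "k - 1"] by blast
  obtain B where "B \<ge> 0" and regroup: "\<And>L F. L \<ge> 1 \<Longrightarrow> (\<forall>t. F t \<ge> 0) \<Longrightarrow>
      (\<Sum>hs\<in>shift_lists (k - 1) L. F (fact k * prod_list hs))
        \<le> B * real L powr \<epsilon> * (\<Sum>t\<in>{1..fact k * L ^ (k - 1)}. F t)"
    using sum_shift_lists_prod_le_powr[OF assms(2), of "fact k" "k - 1"] by auto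
  show ?thesis
  proof (rule exI[of _ "Cw * (1 + (1 + 2 * pi * c2) * B)"], rule exI[of _ 0], rule exI[of _ 1],
      intro allI impI)
    fix X :: nat and G :: real and P :: "real poly" and g :: "real \<Rightarrow> real" and D :: "nat \<Rightarrow> real \<Rightarrow> real"
    assume "1 \<le> real X" "0 \<le> G" "degree P = k" and derivs: "\<forall>x\<in>{real X..2 * real X}. D 0 x = g x"
      "\<forall>r<k. \<forall>x\<in>{real X..2 * real X}.
         (D r has_real_derivative D (Suc r) x) (at x within {real X..2 * real X})"
      and "continuous_on {real X..2 * real X} (D k)"
      and "\<forall>r\<in>{1..k}. \<forall>x\<in>{real X..2 * real X}.
         c1 * G * real X powr (- real r) \<le> \<bar>D r x\<bar> \<and> \<bar>D r x\<bar> \<le> c2 * G * real X powr (- real r)"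
    hence "\<forall>x\<in>{real X..2 * real X}. \<bar>D k x\<bar> \<le> c2 * G * real X powr (- real k)"
      using assms(1) by auto
    with \<open>1 \<le> real X\<close> show "norm (\<Sum>n\<in>{X<..2*X}. e (poly P (real n) + g (real n))) ^ (2 ^ (k - 1))
       \<le> Cw * (1 + (1 + 2 * pi * c2) * B) * (real X ^ (2 ^ (k - 1) - 1)
            + (1 + G) * real X powr (real (2 ^ (k - 1)) - real k + \<epsilon>)
              * (\<Sum>t\<in>{1..fact k * X ^ (k - 1)}. min_recip (real X) (real t * lead_coeff P)))"
      using \<open>Cw > 0\<close> \<open>B \<ge> 0\<close> \<open>0 \<le> G\<close> \<open>degree P = k\<close> assms(1,4) derivs
      by (intro norm_sum_e_poly_plus_smooth_le[OF weyl regroup]) auto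
  qed
qed

end
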